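(* Let $Y$ be a weakly uniformly convex geodesic space satisfying: for every $a\in Y$ and every $\varepsilon>0$ there exists $s>0$ such that $\inf_{r\ge s}\delta_Y(a,r,\varepsilon)>0$. Then $Y$ has property (C) with $\Psi(y,r,\varepsilon)=\delta_Y(y,r,\varepsilon)$ for all $y\in Y$, $r>0$, $\varepsilon\in(0,2]$; that is: (C1) for all $y\in Y$, $r>0$, $\varepsilon\in(0,2]$ and all $x,z\in Y$ with $d(x,y)=r$ and $d(y,z)\ge r$, if $w$ lies on a geodesic segment from $y$ to $z$ with $d(y,w)=r$, then $r+d(x,z)\le d(y,z)+\delta_Y(y,r,\varepsilon)r$ implies $d(w,x)\le\varepsilon r$; (C2) for all $y\in Y$ and $\varepsilon\in(0,2]$ there exists $s>0$ such that $\inf_{r\ge s}\delta_Y(y,r,\varepsilon)>0$.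
   Context: A geodesic space is a metric space in which any two points are joined by a geodesic path (a distance-preserving map from an interval $[0,l]$); its image is a geodesic segment. The modulus of convexity of $Y$ is \[\delta_Y(a,r,\varepsilon)=\inf\{1-d(a,m(x,y))/r : d(a,x)\le r,\ d(a,y)\le r,\ d(x,y)\ge\varepsilon r\}\] for $a\in Y$, $r>0$, $\varepsilon\in(0,2]$, where $m(x,y)$ ranges over midpoints of geodesic segments from $x$ to $y$; $Y$ is weakly uniformly convex if $\delta_Y(a,r,\varepsilon)>0$ for all such $a,r,\varepsilon$. *)

theory Defs
  imports "HOL-Analysis.Analysis" "HOL-Library.Extended_Real"
begin

text \<open>The geodesic space Y is the whole carrier of a metric space type.\<close>

definition geodesic_path :: "(real \<Rightarrow> 'a::metric_space) \<Rightarrow> real \<Rightarrow> 'a \<Rightarrow> 'a \<Rightarrow> bool" where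
  "geodesic_path g l x y \<longleftrightarrow> 0 \<le> l \<and> g 0 = x \<and> g l = y \<and>
     (\<forall>s\<in>{0..l}. \<forall>t\<in>{0..l}. dist (g s) (g t) = \<bar>s - t\<bar>)"

definition geodesic_space :: "'a::metric_space itself \<Rightarrow> bool" where
  "geodesic_space _ \<longleftrightarrow> (\<forall>x y::'a. \<exists>g l. geodesic_path g l x y)"

definition on_geodesic_segment :: "'a::metric_space \<Rightarrow> 'a \<Rightarrow> 'a \<Rightarrow> bool" where
  "on_geodesic_segment x y w \<longleftrightarrow> (\<exists>g l. geodesic_path g l x y \<and> w \<in> g ` {0..l})"

definition geodesic_midpoint :: "'a::metric_space \<Rightarrow> 'a \<Rightarrow> 'a \<Rightarrow> bool" where
  "geodesic_midpoint x y m \<longleftrightarrow> (\<exists>g l. geodesic_path g l x y \<and> m = g (l / 2))"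

text \<open>Modulus of convexity; the infimum is taken in the extended reals, so that the
  infimum of the empty set is \<open>\<infinity>\<close>.\<close>
definition modulus_convexity :: "'a::metric_space \<Rightarrow> real \<Rightarrow> real \<Rightarrow> ereal" where
  "modulus_convexity a r \<epsilon> = Inf {ereal (1 - dist a m / r) | x y m.
      dist a x \<le> r \<and> dist a y \<le> r \<and> dist x y \<ge> \<epsilon> * r \<and> geodesic_midpoint x y m}"

definition weakly_uniformly_convex :: "'a::metric_space itself \<Rightarrow> bool" where
  "weakly_uniformly_convex _ \<longleftrightarrow>
     (\<forall>(a::'a) r \<epsilon>. r > 0 \<longrightarrow> 0 < \<epsilon> \<longrightarrow> \<epsilon> \<le> 2 \<longrightarrow> modulus_convexity a r \<epsilon> > 0)"

end

theory Submission
  imports Defs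
begin

text \<open>Suppose \<open>d(w,x) > \<epsilon> r\<close> and let \<open>m\<close> be a midpoint of \<open>x\<close> and \<open>w\<close>. By definition of the
  modulus, \<open>d(y,m) \<le> r - \<delta>(y,r,\<epsilon>) r < r\<close>, and the hypothesis of (C1) then places both \<open>x\<close>
  and \<open>w\<close> in the closed ball around \<open>z\<close> of radius \<open>d(z,m)\<close>. In a weakly uniformly convex
  space the midpoint of two distinct points of a closed ball lies strictly inside it, so
  \<open>d(z,m) < d(z,m)\<close>. Property (C2) is the extra hypothesis restricted to \<open>\<epsilon> \<le> 2\<close>.\<close>

lemma modulus_convexity_le_midpoint:
  assumes "dist a x \<le> r" "dist a y \<le> r" "dist x y \<ge> \<epsilon> * r" "geodesic_midpoint x y m"
  shows "modulus_convexity a r \<epsilon> \<le> ereal (1 - dist a m / r)"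
  unfolding modulus_convexity_def
  by (rule Inf_lower) (use assms in blast)

lemma weakly_uniformly_convex_midpoint_dist_less:
  assumes wuc: "weakly_uniformly_convex TYPE('a::metric_space)"
    and ax: "dist a x \<le> R" and ay: "dist a y \<le> R" and "x \<noteq> (y::'a)"
    and mid: "geodesic_midpoint x y m"
  shows "dist a m < R"
proof -
  have dxy: "dist x y > 0" using \<open>x \<noteq> y\<close> by simp
  have "dist x y \<le> 2 * R"
    using dist_triangle[of x y a] ax ay by (simp add: dist_commute)
  then have R_pos: "R > 0" using dxy by linarith
  define \<epsilon> where "\<epsilon> = dist x y / R"
  have "0 < \<epsilon>" using R_pos dxy by (simp add: \<epsilon>_def)
  moreover have "\<epsilon> \<le> 2" using R_pos \<open>dist x y \<le> 2 * R\<close> by (simp add: \<epsilon>_def pos_divide_le_eq)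
  moreover have "\<epsilon> * R = dist x y" using R_pos by (simp add: \<epsilon>_def)
  ultimately have "0 < modulus_convexity a R \<epsilon>"
    using wuc R_pos unfolding weakly_uniformly_convex_def by blast
  also have "\<dots> \<le> ereal (1 - dist a m / R)"
    by (rule modulus_convexity_le_midpoint) (use ax ay \<open>\<epsilon> * R = dist x y\<close> mid in auto)
  finally show ?thesis using R_pos by (simp add: field_simps)
qed

lemma on_geodesic_segment_dist_add:
  assumes "on_geodesic_segment x y w"
  shows "dist x w + dist w y = dist x y"
proof -
  obtain g l t where g: "geodesic_path g l x y" and t: "t \<in> {0..l}" "w = g t"
    using assms unfolding on_geodesic_segment_def by blast
  have "0 \<le> l" "g 0 = x" "g l = y"
    and isom: "\<And>s u. s \<in> {0..l} \<Longrightarrow> u \<in> {0..l} \<Longrightarrow> dist (g s) (g u) = \<bar>s - u\<bar>"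
    using g unfolding geodesic_path_def by auto
  then show ?thesis using isom[of 0 t] isom[of t l] isom[of 0 l] t by auto
qed

lemma property_C1:
  assumes geo: "geodesic_space TYPE('a::metric_space)"
    and wuc: "weakly_uniformly_convex TYPE('a)"
    and r: "r > 0" and \<epsilon>: "0 < \<epsilon>" "\<epsilon> \<le> 2"
    and xy: "dist x y = r"
    and seg: "on_geodesic_segment y z w" and yw: "dist y w = r"
    and H: "ereal (r + dist x z) \<le> ereal (dist y z) + modulus_convexity y r \<epsilon> * ereal r"
  shows "dist w (x::'a) \<le> \<epsilon> * r"
proof (rule ccontr)
  assume far: "\<not> dist w x \<le> \<epsilon> * r"
  obtain g l where "geodesic_path g l x w"
    using geo unfolding geodesic_space_def by blast
  then have mid: "geodesic_midpoint x w (g (l / 2))" (is "geodesic_midpoint x w ?m")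
    unfolding geodesic_midpoint_def by blast
  have "modulus_convexity y r \<epsilon> \<le> ereal (1 - dist y ?m / r)"
    by (rule modulus_convexity_le_midpoint) (use xy yw far mid in \<open>auto simp: dist_commute\<close>)
  moreover have "modulus_convexity y r \<epsilon> > 0"
    using wuc r \<epsilon> unfolding weakly_uniformly_convex_def by blast
  ultimately obtain \<delta> where \<delta>: "modulus_convexity y r \<epsilon> = ereal \<delta>" "0 < \<delta>"
    "\<delta> \<le> 1 - dist y ?m / r"
    by (cases "modulus_convexity y r \<epsilon>") auto
  have ym: "dist y ?m \<le> r - \<delta> * r" using \<delta>(3) r by (simp add: field_simps)
  have "r + dist x z \<le> dist y z + \<delta> * r" using H \<delta>(1) by simp
  then have "dist z x \<le> dist z ?m"
    using ym dist_triangle[of y z ?m] by (simp add: dist_commute)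
  moreover have "dist z w \<le> dist z ?m"
    using on_geodesic_segment_dist_add[OF seg] yw ym \<delta>(2) r dist_triangle[of y z ?m]
    by (simp add: dist_commute) (smt (verit) mult_pos_pos)
  moreover have "x \<noteq> w" using far \<epsilon> r by auto
  ultimately have "dist z ?m < dist z ?m"
    using weakly_uniformly_convex_midpoint_dist_less[OF wuc _ _ _ mid] by blast
  then show False by simp
qed

theorem lemma2p1:
  assumes geo: "geodesic_space TYPE('a::metric_space)"
    and wuc: "weakly_uniformly_convex TYPE('a)"
    and hyp: "\<And>(a::'a) \<epsilon>. \<epsilon> > 0 \<Longrightarrow>
               \<exists>s>0. (INF r\<in>{s..}. modulus_convexity a r \<epsilon>) > 0"
  shows "(\<forall>(y::'a) r \<epsilon> x z w. r > 0 \<longrightarrow> 0 < \<epsilon> \<longrightarrow> \<epsilon> \<le> 2 \<longrightarrow>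
            dist x y = r \<longrightarrow> dist y z \<ge> r \<longrightarrow>
            on_geodesic_segment y z w \<longrightarrow> dist y w = r \<longrightarrow>
            ereal (r + dist x z) \<le> ereal (dist y z) + modulus_convexity y r \<epsilon> * ereal r \<longrightarrow>
            dist w x \<le> \<epsilon> * r)
       \<and> (\<forall>(y::'a) \<epsilon>. 0 < \<epsilon> \<longrightarrow> \<epsilon> \<le> 2 \<longrightarrow>
            (\<exists>s>0. (INF r\<in>{s..}. modulus_convexity y r \<epsilon>) > 0))"
  using property_C1[OF geo wuc] hyp by blast

end
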